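(* The set Ghost World $\mathrm{GW}$ of bipartite correlations is closed under wirings: for any finite collection of boxes $P_1,\dots,P_n\in\mathrm{GW}$ and any pair of wirings $\mathcal{W}_A,\mathcal{W}_B$, the wired box $\mathcal{W}_A\otimes\mathcal{W}_B(\otimes_{i=1}^nP_i)$ belongs to $\mathrm{GW}$.
   Context: A bipartite box is a conditional distribution $P(a,b|x,y)$ with finite input alphabets $\mathcal{X},\mathcal{Y}$ and finite output alphabets $\mathcal{A},\mathcal{B}$; tripartite boxes $P(a_1,a_2,a_3|x_1,x_2,x_3)$ are defined analogously. A multipartite box is no-signalling if, for every party, summing over that party's output gives a result independent of that party's input. Ghost World: a bipartite box $P(a,b|x,y)$ belongs to $\mathrm{GW}$ iff there exist no-signalling tripartite boxes $P_A(a,a',b|x,x',y)$ (with $a,a'\in\mathcal{A}$, $x,x'\in\mathcal{X}$) and $P_B(a,b,b'|x,y,y')$ (with $b,b'\in\mathcal{B}$, $y,y'\in\mathcal{Y}$) such that (1) $P_A$ is invariant under exchanging its first two parties, i.e. $P_A(a,a',b|x,x',y)=P_A(a',a,b|x',x,y)$, and $P_B$ is invariant under exchanging its last two parties, i.e. $P_B(a,b,b'|x,y,y')=P_B(a,b',b|x,y',y)$; (2) $P(a,b|x,y)=\sum_{a'}P_A(a,a',b|x,x',y)=\sum_{b'}P_B(a,b,b'|x,y,y')$ for all $x',y'$. ($\mathrm{GW}$ is considered in every bipartite Bell scenario.) Wirings: given $n$ bipartite boxes $P_1,\dots,P_n$ (each in some bipartite Bell scenario), with Alice holding the first side of each and Bob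 the second, and a target scenario $(\mathcal{X}',\mathcal{Y}',\mathcal{A}',\mathcal{B}')$, a (deterministic) wiring $\mathcal{W}_A$ for Alice is a procedure that, on effective input $x'\in\mathcal{X}'$, sequentially chooses a not-yet-used box $i$ and an input for Alice's side of that box and receives the output, where each choice is a function of $x'$ and all previous boxes, inputs and outputs; finally it outputs $a'\in\mathcal{A}'$ as a function of $x'$ and the full history. Bob's wiring $\mathcal{W}_B$ is analogous. Using the boxes independently this defines the box $\mathcal{W}_A\otimes\mathcal{W}_B(\otimes_{i=1}^nP_i)(a',b'|x',y')$. *)

theory Defs
  imports Complex_Main "HOL-Library.FuncSet"
begin

text \<open>A bipartite box is a function P a b x y (output a, output b, input x, input y) and
only its values on the alphabets matter. A tripartite box is Q a1 a2 a3 x1 x2 x3.\<close>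

type_synonym box2 = "nat \<Rightarrow> nat \<Rightarrow> nat \<Rightarrow> nat \<Rightarrow> real"
type_synonym box3 = "nat \<Rightarrow> nat \<Rightarrow> nat \<Rightarrow> nat \<Rightarrow> nat \<Rightarrow> nat \<Rightarrow> real"

definition scenario :: "nat set \<Rightarrow> nat set \<Rightarrow> nat set \<Rightarrow> nat set \<Rightarrow> bool" where
  "scenario X Y A B \<longleftrightarrow> finite X \<and> finite Y \<and> finite A \<and> finite B \<and>
     X \<noteq> {} \<and> Y \<noteq> {} \<and> A \<noteq> {} \<and> B \<noteq> {}"

definition is_box2 :: "nat set \<Rightarrow> nat set \<Rightarrow> nat set \<Rightarrow> nat set \<Rightarrow> box2 \<Rightarrow> bool" where
  "is_box2 X Y A B P \<longleftrightarrow>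
     (\<forall>x\<in>X. \<forall>y\<in>Y. (\<forall>a\<in>A. \<forall>b\<in>B. 0 \<le> P a b x y) \<and> (\<Sum>a\<in>A. \<Sum>b\<in>B. P a b x y) = 1)"

definition is_box3 :: "nat set \<Rightarrow> nat set \<Rightarrow> nat set \<Rightarrow> nat set \<Rightarrow> nat set \<Rightarrow> nat set
     \<Rightarrow> box3 \<Rightarrow> bool" where
  "is_box3 X1 X2 X3 A1 A2 A3 Q \<longleftrightarrow>
     (\<forall>x1\<in>X1. \<forall>x2\<in>X2. \<forall>x3\<in>X3.
        (\<forall>a1\<in>A1. \<forall>a2\<in>A2. \<forall>a3\<in>A3. 0 \<le> Q a1 a2 a3 x1 x2 x3) \<and>
        (\<Sum>a1\<in>A1. \<Sum>a2\<in>A2. \<Sum>a3\<in>A3. Q a1 a2 a3 x1 x2 x3) = 1)"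

definition no_signalling3 :: "nat set \<Rightarrow> nat set \<Rightarrow> nat set \<Rightarrow> nat set \<Rightarrow> nat set \<Rightarrow> nat set
     \<Rightarrow> box3 \<Rightarrow> bool" where
  "no_signalling3 X1 X2 X3 A1 A2 A3 Q \<longleftrightarrow>
     (\<forall>a2\<in>A2. \<forall>a3\<in>A3. \<forall>x1\<in>X1. \<forall>x1'\<in>X1. \<forall>x2\<in>X2. \<forall>x3\<in>X3.
        (\<Sum>a1\<in>A1. Q a1 a2 a3 x1 x2 x3) = (\<Sum>a1\<in>A1. Q a1 a2 a3 x1' x2 x3)) \<and>
     (\<forall>a1\<in>A1. \<forall>a3\<in>A3. \<forall>x1\<in>X1. \<forall>x2\<in>X2. \<forall>x2'\<in>X2. \<forall>x3\<in>X3.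
        (\<Sum>a2\<in>A2. Q a1 a2 a3 x1 x2 x3) = (\<Sum>a2\<in>A2. Q a1 a2 a3 x1 x2' x3)) \<and>
     (\<forall>a1\<in>A1. \<forall>a2\<in>A2. \<forall>x1\<in>X1. \<forall>x2\<in>X2. \<forall>x3\<in>X3. \<forall>x3'\<in>X3.
        (\<Sum>a3\<in>A3. Q a1 a2 a3 x1 x2 x3) = (\<Sum>a3\<in>A3. Q a1 a2 a3 x1 x2 x3'))"

definition ns_box3 :: "nat set \<Rightarrow> nat set \<Rightarrow> nat set \<Rightarrow> nat set \<Rightarrow> nat set \<Rightarrow> nat set
     \<Rightarrow> box3 \<Rightarrow> bool" where
  "ns_box3 X1 X2 X3 A1 A2 A3 Q \<longleftrightarrow>
     is_box3 X1 X2 X3 A1 A2 A3 Q \<and> no_signalling3 X1 X2 X3 A1 A2 A3 Q"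

definition GW :: "nat set \<Rightarrow> nat set \<Rightarrow> nat set \<Rightarrow> nat set \<Rightarrow> box2 \<Rightarrow> bool" where
  "GW X Y A B P \<longleftrightarrow> is_box2 X Y A B P \<and>
     (\<exists>PA PB.
        ns_box3 X X Y A A B PA \<and> ns_box3 X Y Y A B B PB \<and>
        (\<forall>a\<in>A. \<forall>a'\<in>A. \<forall>b\<in>B. \<forall>x\<in>X. \<forall>x'\<in>X. \<forall>y\<in>Y.
            PA a a' b x x' y = PA a' a b x' x y) \<and>
        (\<forall>a\<in>A. \<forall>b\<in>B. \<forall>b'\<in>B. \<forall>x\<in>X. \<forall>y\<in>Y. \<forall>y'\<in>Y.
            PB a b b' x y y' = PB a b' b x y' y) \<and>
        (\<forall>a\<in>A. \<forall>b\<in>B. \<forall>x\<in>X. \<forall>y\<in>Y. \<forall>x'\<in>X. \<forall>y'\<in>Y.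
            P a b x y = (\<Sum>a'\<in>A. PA a a' b x x' y) \<and>
            P a b x y = (\<Sum>b'\<in>B. PB a b b' x y y')))"

text \<open>A history is a list of (box index, input, output) triples. A deterministic
wiring consists of a selection function (effective input, history) \<mapsto> (box, input)
and an output function (effective input, full history) \<mapsto> effective output.\<close>
type_synonym hist = "(nat \<times> nat \<times> nat) list"
type_synonym wiring = "(nat \<Rightarrow> hist \<Rightarrow> nat \<times> nat) \<times> (nat \<Rightarrow> hist \<Rightarrow> nat)"

text \<open>History after k steps on effective input x, when box i answers with out i.\<close>
fun run :: "wiring \<Rightarrow> nat \<Rightarrow> (nat \<Rightarrow> nat) \<Rightarrow> nat \<Rightarrow> hist" where
  "run W x out 0 = []"
| "run W x out (Suc k) =
     (let h = run W x out k; (i, u) = fst W x h in h @ [(i, u, out i)])"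

definition valid_wiring :: "nat \<Rightarrow> (nat \<Rightarrow> nat set) \<Rightarrow> (nat \<Rightarrow> nat set) \<Rightarrow> nat set \<Rightarrow> nat set
     \<Rightarrow> wiring \<Rightarrow> bool" where
  "valid_wiring n Xs As X' A' W \<longleftrightarrow>
     (\<forall>x\<in>X'. \<forall>out\<in>PiE {..<n} As.
        (\<forall>k<n. let h = run W x out k; (i, u) = fst W x h in
            i < n \<and> i \<notin> set (map fst h) \<and> u \<in> Xs i) \<and>
        snd W x (run W x out n) \<in> A')"

definition input_of :: "hist \<Rightarrow> nat \<Rightarrow> nat" where
  "input_of h i = (case find (\<lambda>(j, _, _). j = i) h of Some (_, u, _) \<Rightarrow> u | None \<Rightarrow> undefined)"

definition wired :: "nat \<Rightarrow> (nat \<Rightarrow> nat set) \<Rightarrow> (nat \<Rightarrow> nat set) \<Rightarrow> (nat \<Rightarrow> box2)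
     \<Rightarrow> wiring \<Rightarrow> wiring \<Rightarrow> box2" where
  "wired n As Bs Ps WA WB a' b' x' y' =
     (\<Sum>\<alpha>\<in>PiE {..<n} As. \<Sum>\<beta>\<in>PiE {..<n} Bs.
        let hA = run WA x' \<alpha> n; hB = run WB y' \<beta> n in
        (if snd WA x' hA = a' \<and> snd WB y' hB = b'
         then (\<Prod>i<n. Ps i (\<alpha> i) (\<beta> i) (input_of hA i) (input_of hB i)) else 0))"

end

theory Submission
  imports Defs
begin

text \<open>Take the extensions PA_i, PB_i of the boxes P_i. Wiring PA_i with Alice's wiring on
both of its first two parties and Bob's wiring on the third gives PA'; PB' is built likewise.
Since both copies of Alice use the same wiring, PA' inherits the exchange symmetry of the PA_i.
The heart of the argument is a marginalisation principle: a valid wiring queries every box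
exactly once, so if the marginal of each box over one party's output does not depend on that
party's input, the outputs can be summed out box by box in the order in which they are queried.
Hence summing a wired box over one party's final output gives the wiring of the marginal boxes.
This yields no-signalling of PA' and PB', and shows that their marginals are the wired box.\<close>

text \<open>Histories are generated from a bare selection strategy rather than a wiring, because
the inductions below replace the strategy by its residual after the first query.\<close>

fun play :: "(hist \<Rightarrow> nat \<times> nat) \<Rightarrow> (nat \<Rightarrow> nat) \<Rightarrow> nat \<Rightarrow> hist" where
  "play s out 0 = []"
| "play s out (Suc k) = (let h = play s out k in h @ [(fst (s h), snd (s h), out (fst (s h)))])"

lemma run_eq_play: "run W x out k = play (fst W x) out k"
  by (induction k) (simp_all add: Let_def split_beta)

definition residual_strategy :: "(hist \<Rightarrow> nat \<times> nat) \<Rightarrow> nat \<Rightarrow> hist \<Rightarrow> nat \<times> nat" where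
  "residual_strategy s ob h = s ((fst (s []), snd (s []), ob) # h)"

lemma play_Suc_Cons:
  "play s out (Suc k) =
     (fst (s []), snd (s []), out (fst (s []))) # play (residual_strategy s (out (fst (s [])))) out k"
  by (induction k) (simp_all add: Let_def residual_strategy_def)

lemma play_fun_upd:
  "(\<And>j. j < k \<Longrightarrow> fst (s (play s out j)) \<noteq> i) \<Longrightarrow> play s (out(i := z)) k = play s out k"
  by (induction k) (auto simp: Let_def)

lemma input_of_Cons_same [simp]: "input_of ((i, u, ob) # h) i = u"
  by (simp add: input_of_def)

lemma input_of_Cons_other [simp]: "j \<noteq> i \<Longrightarrow> input_of ((i, u, ob) # h) j = input_of h j"
  by (simp add: input_of_def)

definition legal_strategy :: "nat set \<Rightarrow> (nat \<Rightarrow> nat set) \<Rightarrow> (nat \<Rightarrow> nat set) \<Rightarrow> nat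
     \<Rightarrow> (hist \<Rightarrow> nat \<times> nat) \<Rightarrow> bool" where
  "legal_strategy I Xs As k s \<longleftrightarrow>
     (\<forall>out\<in>PiE I As. \<forall>j<k. let h = play s out j in
        fst (s h) \<in> I \<and> fst (s h) \<notin> fst ` set h \<and> snd (s h) \<in> Xs (fst (s h)))"

lemma legal_strategy_residual:
  fixes s :: "hist \<Rightarrow> nat \<times> nat" and ob :: nat
  defines "i0 \<equiv> fst (s [])" and "u0 \<equiv> snd (s [])" and "s' \<equiv> residual_strategy s ob"
  assumes legal: "legal_strategy I Xs As (Suc k) s"
    and i0: "i0 \<in> I" and ob: "ob \<in> As i0"
  shows "legal_strategy (I - {i0}) Xs As k s'"
    and "out \<in> PiE (I - {i0}) As \<Longrightarrow> play s (out(i0 := ob)) (Suc k) = (i0, u0, ob) # play s' out k"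
proof -
  have step: "let h = play s' (out(i0 := ob)) j in
      fst (s' h) \<in> I - {i0} \<and> fst (s' h) \<notin> fst ` set h \<and> snd (s' h) \<in> Xs (fst (s' h))"
    if out: "out \<in> PiE (I - {i0}) As" and "j < k" for out j
  proof -
    have "out(i0 := ob) \<in> PiE I As"
      using out ob i0 by (auto simp: PiE_def extensional_def)
    then have "let h = play s (out(i0 := ob)) (Suc j) in
        fst (s h) \<in> I \<and> fst (s h) \<notin> fst ` set h \<and> snd (s h) \<in> Xs (fst (s h))"
      using legal \<open>j < k\<close> unfolding legal_strategy_def by blast
    then show ?thesis
      unfolding play_Suc_Cons[of s] by (auto simp: Let_def s'_def i0_def residual_strategy_def)
  qed
  have agree: "play s' (out(i0 := ob)) j = play s' out j"
    if out: "out \<in> PiE (I - {i0}) As" and "j \<le> k" for out j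
    using play_fun_upd[of j s' "out(i0 := ob)" i0 "out i0"] step[OF out] \<open>j \<le> k\<close>
    by (auto simp: Let_def)
  show "legal_strategy (I - {i0}) Xs As k s'"
    unfolding legal_strategy_def using step agree by (metis less_imp_le)
  show "play s (out(i0 := ob)) (Suc k) = (i0, u0, ob) # play s' out k"
    if "out \<in> PiE (I - {i0}) As"
    using play_Suc_Cons[of s "out(i0 := ob)" k] agree[OF that order_refl]
    by (simp add: i0_def u0_def s'_def)
qed

lemma sum_PiE_insert:
  assumes "i \<notin> I"
  shows "(\<Sum>out\<in>PiE (insert i I) As. F out) = (\<Sum>ob\<in>As i. \<Sum>out\<in>PiE I As. F (out(i := ob)))"
proof -
  have "(\<Sum>out\<in>PiE (insert i I) As. F out) = (\<Sum>(ob, out)\<in>As i \<times> PiE I As. F (out(i := ob)))"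
    unfolding PiE_insert_eq by (subst sum.reindex[OF inj_combinator[OF assms]]) (simp add: split_beta)
  then show ?thesis
    by (simp add: sum.cartesian_product)
qed

lemma legal_strategy_step:
  assumes legal: "legal_strategy I Xs As (Suc k) s" and out: "out \<in> PiE I As"
    and I: "finite I" "card I = Suc k"
  obtains i0 I' u0 where "I = insert i0 I'" "i0 \<notin> I'" "finite I'" "card I' = k" "u0 \<in> Xs i0"
    and "\<And>ob. ob \<in> As i0 \<Longrightarrow> legal_strategy I' Xs As k (residual_strategy s ob)"
    and "\<And>ob out. ob \<in> As i0 \<Longrightarrow> out \<in> PiE I' As \<Longrightarrow>
           play s (out(i0 := ob)) (Suc k) = (i0, u0, ob) # play (residual_strategy s ob) out k"
proof -
  have first: "fst (s []) \<in> I" "snd (s []) \<in> Xs (fst (s []))"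
    using legal out unfolding legal_strategy_def by (metis play.simps(1) zero_less_Suc)+
  show thesis
  proof
    show "I = insert (fst (s [])) (I - {fst (s [])})" "finite (I - {fst (s [])})"
      "card (I - {fst (s [])}) = k"
      using first I by auto
  qed (use first legal_strategy_residual[OF legal first(1)] in auto)
qed

lemma sum_PiE_prod_play:
  fixes f :: "nat \<Rightarrow> nat \<Rightarrow> nat \<Rightarrow> 'c :: comm_semiring_1"
  assumes "finite I" "card I = k" "\<And>i. i \<in> I \<Longrightarrow> As i \<noteq> {}" "legal_strategy I Xs As k s"
    and "\<And>i u. i \<in> I \<Longrightarrow> u \<in> Xs i \<Longrightarrow> (\<Sum>ob\<in>As i. f i ob u) = c i"
  shows "(\<Sum>out\<in>PiE I As. \<Prod>i\<in>I. f i (out i) (input_of (play s out k) i)) = (\<Prod>i\<in>I. c i)"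
  using assms
proof (induction k arbitrary: I s)
  case 0
  then show ?case by simp
next
  case (Suc k)
  \<comment> \<open>Split off the first box queried: its output only enters the rest through the
    residual strategy, so its sum over outputs factors out as c i0.\<close>
  have "PiE I As \<noteq> {}"
    using Suc.prems(3) by (simp add: PiE_eq_empty_iff)
  then obtain out0 where out0: "out0 \<in> PiE I As"
    by blast
  obtain i0 I' u0 where I: "I = insert i0 I'" "i0 \<notin> I'" "finite I'" "card I' = k"
    and u0: "u0 \<in> Xs i0"
    and legal': "\<And>ob. ob \<in> As i0 \<Longrightarrow> legal_strategy I' Xs As k (residual_strategy s ob)"
    and play_step: "\<And>ob out. ob \<in> As i0 \<Longrightarrow> out \<in> PiE I' As \<Longrightarrow>
           play s (out(i0 := ob)) (Suc k) = (i0, u0, ob) # play (residual_strategy s ob) out k"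
    using legal_strategy_step[OF Suc.prems(4) out0 Suc.prems(1,2)] by metis
  have "(\<Sum>out\<in>PiE I As. \<Prod>i\<in>I. f i (out i) (input_of (play s out (Suc k)) i))
      = (\<Sum>ob\<in>As i0. \<Sum>out\<in>PiE I' As.
           f i0 ob u0 * (\<Prod>i\<in>I'. f i (out i) (input_of (play (residual_strategy s ob) out k) i)))"
    unfolding I(1) sum_PiE_insert[OF I(2)]
  proof (intro sum.cong refl)
    fix ob out assume "ob \<in> As i0" "out \<in> PiE I' As"
    with play_step have "play s (out(i0 := ob)) (Suc k) = (i0, u0, ob) # play (residual_strategy s ob) out k" .
    then show "(\<Prod>i\<in>insert i0 I'. f i ((out(i0 := ob)) i) (input_of (play s (out(i0 := ob)) (Suc k)) i)) =
      f i0 ob u0 * (\<Prod>i\<in>I'. f i (out i) (input_of (play (residual_strategy s ob) out k) i))"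
      using I(2,3) by (simp del: play.simps) (intro arg_cong[where f="(*) _"] prod.cong; auto)
  qed
  also have "\<dots> = (\<Sum>ob\<in>As i0. f i0 ob u0 * (\<Prod>i\<in>I'. c i))"
  proof (intro sum.cong refl)
    fix ob assume "ob \<in> As i0"
    have "(\<Sum>out\<in>PiE I' As. \<Prod>i\<in>I'. f i (out i) (input_of (play (residual_strategy s ob) out k) i))
        = (\<Prod>i\<in>I'. c i)"
      by (rule Suc.IH[OF I(3,4) _ legal'[OF \<open>ob \<in> As i0\<close>]]) (use Suc.prems(3,5) I(1) in auto)
    then show "(\<Sum>out\<in>PiE I' As. f i0 ob u0 *
          (\<Prod>i\<in>I'. f i (out i) (input_of (play (residual_strategy s ob) out k) i)))
        = f i0 ob u0 * (\<Prod>i\<in>I'. c i)"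
      by (simp add: sum_distrib_left[symmetric])
  qed
  also have "\<dots> = (\<Prod>i\<in>I. c i)"
    using Suc.prems(5) I u0 by (simp add: sum_distrib_right[symmetric])
  finally show ?case .
qed

lemma play_input_in:
  assumes "finite I" "card I = k" "legal_strategy I Xs As k s" "out \<in> PiE I As" "i \<in> I"
  shows "input_of (play s out k) i \<in> Xs i"
  using assms
proof (induction k arbitrary: I s out)
  case 0
  then show ?case by simp
next
  case (Suc k)
  obtain i0 I' u0 where I: "I = insert i0 I'" "i0 \<notin> I'" "finite I'" "card I' = k"
    and u0: "u0 \<in> Xs i0"
    and legal': "\<And>ob. ob \<in> As i0 \<Longrightarrow> legal_strategy I' Xs As k (residual_strategy s ob)"
    and play_step: "\<And>ob out. ob \<in> As i0 \<Longrightarrow> out \<in> PiE I' As \<Longrightarrow>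
           play s (out(i0 := ob)) (Suc k) = (i0, u0, ob) # play (residual_strategy s ob) out k"
    using legal_strategy_step[OF Suc.prems(3,4,1,2)] by metis
  define out' where "out' = out(i0 := undefined)"
  have out': "out' \<in> PiE I' As"
    using Suc.prems(4) I(1,2) unfolding out'_def by (auto simp: PiE_def extensional_def)
  have ob: "out i0 \<in> As i0"
    using Suc.prems(4) I(1) by auto
  have "play s out (Suc k) = (i0, u0, out i0) # play (residual_strategy s (out i0)) out' k"
    using play_step[OF ob out'] by (simp add: out'_def)
  then show ?case
    using Suc.IH[OF I(3,4) legal'[OF ob] out'] Suc.prems(5) I(1) u0 by (cases "i = i0") auto
qed

lemma valid_wiring_legal_strategy:
  "valid_wiring n Xs As X' A' W \<Longrightarrow> x \<in> X' \<Longrightarrow> legal_strategy {..<n} Xs As n (fst W x)"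
  unfolding valid_wiring_def legal_strategy_def by (auto simp: Let_def split_beta run_eq_play)

lemma valid_wiring_sum_prod:
  fixes f :: "nat \<Rightarrow> nat \<Rightarrow> nat \<Rightarrow> 'c :: comm_semiring_1"
  assumes "valid_wiring n Xs As X' A' W" "x \<in> X'" "\<And>i. i < n \<Longrightarrow> As i \<noteq> {}"
    and "\<And>i u. i < n \<Longrightarrow> u \<in> Xs i \<Longrightarrow> (\<Sum>ob\<in>As i. f i ob u) = c i"
  shows "(\<Sum>out\<in>PiE {..<n} As. \<Prod>i<n. f i (out i) (input_of (run W x out n) i)) = (\<Prod>i<n. c i)"
  using sum_PiE_prod_play[of "{..<n}" n As Xs "fst W x" f c] valid_wiring_legal_strategy[OF assms(1,2)]
    assms(3,4)
  by (simp add: run_eq_play)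

lemma valid_wiring_input_in:
  assumes "valid_wiring n Xs As X' A' W" "x \<in> X'" "out \<in> PiE {..<n} As" "i < n"
  shows "input_of (run W x out n) i \<in> Xs i"
  using play_input_in[of "{..<n}" n Xs As "fst W x" out i] valid_wiring_legal_strategy[OF assms(1,2)]
    assms(3,4)
  by (simp add: run_eq_play)

lemma valid_wiring_output_in:
  "valid_wiring n Xs As X' A' W \<Longrightarrow> x \<in> X' \<Longrightarrow> out \<in> PiE {..<n} As \<Longrightarrow> snd W x (run W x out n) \<in> A'"
  unfolding valid_wiring_def by blast

definition wired3 :: "nat \<Rightarrow> (nat \<Rightarrow> nat set) \<Rightarrow> (nat \<Rightarrow> nat set) \<Rightarrow> (nat \<Rightarrow> nat set) \<Rightarrow> (nat \<Rightarrow> box3)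
     \<Rightarrow> wiring \<Rightarrow> wiring \<Rightarrow> wiring \<Rightarrow> box3" where
  "wired3 n A1s A2s A3s Qs W1 W2 W3 a1 a2 a3 x1 x2 x3 =
     (\<Sum>\<alpha>1\<in>PiE {..<n} A1s. \<Sum>\<alpha>2\<in>PiE {..<n} A2s. \<Sum>\<alpha>3\<in>PiE {..<n} A3s.
        let h1 = run W1 x1 \<alpha>1 n; h2 = run W2 x2 \<alpha>2 n; h3 = run W3 x3 \<alpha>3 n in
        (if snd W1 x1 h1 = a1 \<and> snd W2 x2 h2 = a2 \<and> snd W3 x3 h3 = a3
         then (\<Prod>i<n. Qs i (\<alpha>1 i) (\<alpha>2 i) (\<alpha>3 i) (input_of h1 i) (input_of h2 i) (input_of h3 i))
         else 0))"

lemma wired3_swap12: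
  "wired3 n A1s A2s A3s Qs W1 W2 W3 a1 a2 a3 x1 x2 x3 =
   wired3 n A2s A1s A3s (\<lambda>i b1 b2 b3 u1 u2 u3. Qs i b2 b1 b3 u2 u1 u3) W2 W1 W3 a2 a1 a3 x2 x1 x3"
  unfolding wired3_def Let_def by (subst sum.swap) (simp add: conj_ac)

lemma wired3_swap23:
  "wired3 n A1s A2s A3s Qs W1 W2 W3 a1 a2 a3 x1 x2 x3 =
   wired3 n A1s A3s A2s (\<lambda>i b1 b2 b3 u1 u2 u3. Qs i b1 b3 b2 u1 u3 u2) W1 W3 W2 a1 a3 a2 x1 x3 x2"
  unfolding wired3_def Let_def by (rule sum.cong[OF refl], subst sum.swap) (simp add: conj_ac)

lemma wired3_swap13:
  "wired3 n A1s A2s A3s Qs W1 W2 W3 a1 a2 a3 x1 x2 x3 =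
   wired3 n A3s A2s A1s (\<lambda>i b1 b2 b3 u1 u2 u3. Qs i b3 b2 b1 u3 u2 u1) W3 W2 W1 a3 a2 a1 x3 x2 x1"
  by (subst wired3_swap12, subst wired3_swap23, subst wired3_swap12) simp

lemma wired3_cong:
  assumes v1: "valid_wiring n X1s A1s X1' A1' W1" and v2: "valid_wiring n X2s A2s X2' A2' W2"
    and v3: "valid_wiring n X3s A3s X3' A3' W3"
    and x: "x1 \<in> X1'" "x2 \<in> X2'" "x3 \<in> X3'"
    and eq: "\<And>i b1 b2 b3 u1 u2 u3. i < n \<Longrightarrow> b1 \<in> A1s i \<Longrightarrow> b2 \<in> A2s i \<Longrightarrow> b3 \<in> A3s i \<Longrightarrow>
       u1 \<in> X1s i \<Longrightarrow> u2 \<in> X2s i \<Longrightarrow> u3 \<in> X3s i \<Longrightarrow> Qs i b1 b2 b3 u1 u2 u3 = Qs' i b1 b2 b3 u1 u2 u3"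
  shows "wired3 n A1s A2s A3s Qs W1 W2 W3 a1 a2 a3 x1 x2 x3 =
    wired3 n A1s A2s A3s Qs' W1 W2 W3 a1 a2 a3 x1 x2 x3"
  unfolding wired3_def Let_def
proof (intro sum.cong refl if_cong prod.cong)
  fix \<alpha>1 \<alpha>2 \<alpha>3 i
  assume \<alpha>: "\<alpha>1 \<in> PiE {..<n} A1s" "\<alpha>2 \<in> PiE {..<n} A2s" "\<alpha>3 \<in> PiE {..<n} A3s"
    and i: "i \<in> {..<n}"
  show "Qs i (\<alpha>1 i) (\<alpha>2 i) (\<alpha>3 i) (input_of (run W1 x1 \<alpha>1 n) i) (input_of (run W2 x2 \<alpha>2 n) i)
        (input_of (run W3 x3 \<alpha>3 n) i) =
      Qs' i (\<alpha>1 i) (\<alpha>2 i) (\<alpha>3 i) (input_of (run W1 x1 \<alpha>1 n) i) (input_of (run W2 x2 \<alpha>2 n) i)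
        (input_of (run W3 x3 \<alpha>3 n) i)"
    using i PiE_mem[OF \<alpha>(1)] PiE_mem[OF \<alpha>(2)] PiE_mem[OF \<alpha>(3)]
      valid_wiring_input_in[OF v1 x(1) \<alpha>(1)] valid_wiring_input_in[OF v2 x(2) \<alpha>(2)]
      valid_wiring_input_in[OF v3 x(3) \<alpha>(3)] by (intro eq) simp_all
qed

lemma sum_wired3_party3:
  assumes v1: "valid_wiring n X1s A1s X1' A1' W1" and v2: "valid_wiring n X2s A2s X2' A2' W2"
    and v3: "valid_wiring n X3s A3s X3' A3' W3"
    and x: "x1 \<in> X1'" "x2 \<in> X2'" "x3 \<in> X3'"
    and ne: "\<And>i. i < n \<Longrightarrow> A3s i \<noteq> {}" and fin: "finite A3'"
    and marg: "\<And>i b1 b2 u1 u2 u3. i < n \<Longrightarrow> b1 \<in> A1s i \<Longrightarrow> b2 \<in> A2s i \<Longrightarrow>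
       u1 \<in> X1s i \<Longrightarrow> u2 \<in> X2s i \<Longrightarrow> u3 \<in> X3s i \<Longrightarrow>
       (\<Sum>b3\<in>A3s i. Qs i b1 b2 b3 u1 u2 u3) = Rs i b1 b2 u1 u2"
  shows "(\<Sum>a3\<in>A3'. wired3 n A1s A2s A3s Qs W1 W2 W3 a1 a2 a3 x1 x2 x3) =
    wired n A1s A2s Rs W1 W2 a1 a2 x1 x2"
proof -
  let ?c = "\<lambda>\<alpha>1 \<alpha>2. snd W1 x1 (run W1 x1 \<alpha>1 n) = a1 \<and> snd W2 x2 (run W2 x2 \<alpha>2 n) = a2"
  let ?P = "\<lambda>\<alpha>1 \<alpha>2 \<alpha>3. \<Prod>i<n. Qs i (\<alpha>1 i) (\<alpha>2 i) (\<alpha>3 i) (input_of (run W1 x1 \<alpha>1 n) i)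
      (input_of (run W2 x2 \<alpha>2 n) i) (input_of (run W3 x3 \<alpha>3 n) i)"
  have "(\<Sum>a3\<in>A3'. wired3 n A1s A2s A3s Qs W1 W2 W3 a1 a2 a3 x1 x2 x3) =
    (\<Sum>\<alpha>1\<in>PiE {..<n} A1s. \<Sum>\<alpha>2\<in>PiE {..<n} A2s. \<Sum>\<alpha>3\<in>PiE {..<n} A3s. \<Sum>a3\<in>A3'.
      if ?c \<alpha>1 \<alpha>2 \<and> snd W3 x3 (run W3 x3 \<alpha>3 n) = a3 then ?P \<alpha>1 \<alpha>2 \<alpha>3 else 0)"
    unfolding wired3_def Let_def by (simp add: sum.swap[where A = A3'] conj_assoc)
  also have "\<dots> = (\<Sum>\<alpha>1\<in>PiE {..<n} A1s. \<Sum>\<alpha>2\<in>PiE {..<n} A2s.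
      if ?c \<alpha>1 \<alpha>2 then (\<Sum>\<alpha>3\<in>PiE {..<n} A3s. ?P \<alpha>1 \<alpha>2 \<alpha>3) else 0)"
    using valid_wiring_output_in[OF v3 x(3)] fin by (intro sum.cong refl) auto
  also have "\<dots> = wired n A1s A2s Rs W1 W2 a1 a2 x1 x2"
    unfolding wired_def Let_def
  proof (intro sum.cong refl if_cong)
    fix \<alpha>1 \<alpha>2 assume \<alpha>: "\<alpha>1 \<in> PiE {..<n} A1s" "\<alpha>2 \<in> PiE {..<n} A2s"
    show "(\<Sum>\<alpha>3\<in>PiE {..<n} A3s. ?P \<alpha>1 \<alpha>2 \<alpha>3) =
      (\<Prod>i<n. Rs i (\<alpha>1 i) (\<alpha>2 i) (input_of (run W1 x1 \<alpha>1 n) i) (input_of (run W2 x2 \<alpha>2 n) i))"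
      using marg PiE_mem[OF \<alpha>(1)] PiE_mem[OF \<alpha>(2)]
        valid_wiring_input_in[OF v1 x(1) \<alpha>(1)] valid_wiring_input_in[OF v2 x(2) \<alpha>(2)]
      by (intro valid_wiring_sum_prod[OF v3 x(3) ne]) auto
  qed
  finally show ?thesis .
qed

lemma sum_if_conj_eq:
  "finite A \<Longrightarrow> v \<in> A \<Longrightarrow> (\<Sum>a\<in>A. if P \<and> v = a then t else 0) = (if P then t else 0)"
  by (cases P) simp_all

lemma sum_wired_eq_1:
  assumes v1: "valid_wiring n X1s A1s X1' A1' W1" and v2: "valid_wiring n X2s A2s X2' A2' W2"
    and x: "x1 \<in> X1'" "x2 \<in> X2'"
    and ne: "\<And>i. i < n \<Longrightarrow> A1s i \<noteq> {} \<and> A2s i \<noteq> {}" and fin: "finite A1'" "finite A2'"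
    and marg2: "\<And>i b1 u1 u2. i < n \<Longrightarrow> b1 \<in> A1s i \<Longrightarrow> u1 \<in> X1s i \<Longrightarrow> u2 \<in> X2s i \<Longrightarrow>
      (\<Sum>b2\<in>A2s i. Rs i b1 b2 u1 u2) = Ss i b1 u1"
    and marg1: "\<And>i u1. i < n \<Longrightarrow> u1 \<in> X1s i \<Longrightarrow> (\<Sum>b1\<in>A1s i. Ss i b1 u1) = 1"
  shows "(\<Sum>a1\<in>A1'. \<Sum>a2\<in>A2'. wired n A1s A2s Rs W1 W2 a1 a2 x1 x2) = 1"
proof -
  let ?P = "\<lambda>\<alpha>1 \<alpha>2. \<Prod>i<n. Rs i (\<alpha>1 i) (\<alpha>2 i) (input_of (run W1 x1 \<alpha>1 n) i) (input_of (run W2 x2 \<alpha>2 n) i)"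
  have "(\<Sum>a1\<in>A1'. \<Sum>a2\<in>A2'. wired n A1s A2s Rs W1 W2 a1 a2 x1 x2) =
    (\<Sum>\<alpha>1\<in>PiE {..<n} A1s. \<Sum>\<alpha>2\<in>PiE {..<n} A2s. \<Sum>a1\<in>A1'. \<Sum>a2\<in>A2'.
      if snd W1 x1 (run W1 x1 \<alpha>1 n) = a1 \<and> snd W2 x2 (run W2 x2 \<alpha>2 n) = a2 then ?P \<alpha>1 \<alpha>2 else 0)"
    unfolding wired_def Let_def
    by (simp add: sum.swap[where A = A1' and B = "PiE {..<n} A1s"] sum.swap[where A = A1' and B = "PiE {..<n} A2s"]
        sum.swap[where A = A2' and B = "PiE {..<n} A1s"] sum.swap[where A = A2' and B = "PiE {..<n} A2s"])
  also have "\<dots> = (\<Sum>\<alpha>1\<in>PiE {..<n} A1s. \<Sum>\<alpha>2\<in>PiE {..<n} A2s. ?P \<alpha>1 \<alpha>2)"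
    using valid_wiring_output_in[OF v1 x(1)] valid_wiring_output_in[OF v2 x(2)] fin
    by (intro sum.cong refl) (simp add: sum_if_conj_eq)
  also have "\<dots> = (\<Sum>\<alpha>1\<in>PiE {..<n} A1s. \<Prod>i<n. Ss i (\<alpha>1 i) (input_of (run W1 x1 \<alpha>1 n) i))"
  proof (intro sum.cong refl)
    fix \<alpha>1 assume \<alpha>1: "\<alpha>1 \<in> PiE {..<n} A1s"
    show "(\<Sum>\<alpha>2\<in>PiE {..<n} A2s. ?P \<alpha>1 \<alpha>2) = (\<Prod>i<n. Ss i (\<alpha>1 i) (input_of (run W1 x1 \<alpha>1 n) i))"
      using ne marg2 PiE_mem[OF \<alpha>1] valid_wiring_input_in[OF v1 x(1) \<alpha>1]
      by (intro valid_wiring_sum_prod[OF v2 x(2)]) auto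
  qed
  also have "\<dots> = 1"
    using ne marg1 valid_wiring_sum_prod[OF v1 x(1), of Ss "\<lambda>_. 1"] by simp
  finally show ?thesis .
qed

lemma wired3_nonneg:
  assumes v1: "valid_wiring n X1s A1s X1' A1' W1" and v2: "valid_wiring n X2s A2s X2' A2' W2"
    and v3: "valid_wiring n X3s A3s X3' A3' W3"
    and x: "x1 \<in> X1'" "x2 \<in> X2'" "x3 \<in> X3'"
    and nonneg: "\<And>i b1 b2 b3 u1 u2 u3. i < n \<Longrightarrow> b1 \<in> A1s i \<Longrightarrow> b2 \<in> A2s i \<Longrightarrow> b3 \<in> A3s i \<Longrightarrow>
       u1 \<in> X1s i \<Longrightarrow> u2 \<in> X2s i \<Longrightarrow> u3 \<in> X3s i \<Longrightarrow> 0 \<le> Qs i b1 b2 b3 u1 u2 u3"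
  shows "0 \<le> wired3 n A1s A2s A3s Qs W1 W2 W3 a1 a2 a3 x1 x2 x3"
  unfolding wired3_def Let_def
proof (intro sum_nonneg)
  fix \<alpha>1 \<alpha>2 \<alpha>3
  assume \<alpha>: "\<alpha>1 \<in> PiE {..<n} A1s" "\<alpha>2 \<in> PiE {..<n} A2s" "\<alpha>3 \<in> PiE {..<n} A3s"
  have "0 \<le> Qs i (\<alpha>1 i) (\<alpha>2 i) (\<alpha>3 i) (input_of (run W1 x1 \<alpha>1 n) i) (input_of (run W2 x2 \<alpha>2 n) i)
      (input_of (run W3 x3 \<alpha>3 n) i)" if i: "i < n" for i
    using i PiE_mem[OF \<alpha>(1)] PiE_mem[OF \<alpha>(2)] PiE_mem[OF \<alpha>(3)]
      valid_wiring_input_in[OF v1 x(1) \<alpha>(1)] valid_wiring_input_in[OF v2 x(2) \<alpha>(2)]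
      valid_wiring_input_in[OF v3 x(3) \<alpha>(3)] by (intro nonneg) simp_all
  then show "0 \<le> (if snd W1 x1 (run W1 x1 \<alpha>1 n) = a1 \<and> snd W2 x2 (run W2 x2 \<alpha>2 n) = a2 \<and>
        snd W3 x3 (run W3 x3 \<alpha>3 n) = a3
      then \<Prod>i<n. Qs i (\<alpha>1 i) (\<alpha>2 i) (\<alpha>3 i) (input_of (run W1 x1 \<alpha>1 n) i)
        (input_of (run W2 x2 \<alpha>2 n) i) (input_of (run W3 x3 \<alpha>3 n) i)
      else 0)"
    by (auto intro!: prod_nonneg)
qed

lemma ns_box3_nonneg:
  "ns_box3 X1 X2 X3 A1 A2 A3 Q \<Longrightarrow> a1 \<in> A1 \<Longrightarrow> a2 \<in> A2 \<Longrightarrow> a3 \<in> A3 \<Longrightarrow>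
    x1 \<in> X1 \<Longrightarrow> x2 \<in> X2 \<Longrightarrow> x3 \<in> X3 \<Longrightarrow> 0 \<le> Q a1 a2 a3 x1 x2 x3"
  unfolding ns_box3_def is_box3_def by blast

lemma ns_box3_sum_eq_1:
  "ns_box3 X1 X2 X3 A1 A2 A3 Q \<Longrightarrow> x1 \<in> X1 \<Longrightarrow> x2 \<in> X2 \<Longrightarrow> x3 \<in> X3 \<Longrightarrow>
    (\<Sum>a1\<in>A1. \<Sum>a2\<in>A2. \<Sum>a3\<in>A3. Q a1 a2 a3 x1 x2 x3) = 1"
  unfolding ns_box3_def is_box3_def by blast

lemma ns_box3_marginal1:
  "ns_box3 X1 X2 X3 A1 A2 A3 Q \<Longrightarrow> a2 \<in> A2 \<Longrightarrow> a3 \<in> A3 \<Longrightarrow> x1 \<in> X1 \<Longrightarrow> x1' \<in> X1 \<Longrightarrow>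
    x2 \<in> X2 \<Longrightarrow> x3 \<in> X3 \<Longrightarrow> (\<Sum>a1\<in>A1. Q a1 a2 a3 x1 x2 x3) = (\<Sum>a1\<in>A1. Q a1 a2 a3 x1' x2 x3)"
  unfolding ns_box3_def no_signalling3_def by blast

lemma ns_box3_marginal2:
  "ns_box3 X1 X2 X3 A1 A2 A3 Q \<Longrightarrow> a1 \<in> A1 \<Longrightarrow> a3 \<in> A3 \<Longrightarrow> x1 \<in> X1 \<Longrightarrow> x2 \<in> X2 \<Longrightarrow>
    x2' \<in> X2 \<Longrightarrow> x3 \<in> X3 \<Longrightarrow> (\<Sum>a2\<in>A2. Q a1 a2 a3 x1 x2 x3) = (\<Sum>a2\<in>A2. Q a1 a2 a3 x1 x2' x3)"
  unfolding ns_box3_def no_signalling3_def by blast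

lemma ns_box3_marginal3:
  "ns_box3 X1 X2 X3 A1 A2 A3 Q \<Longrightarrow> a1 \<in> A1 \<Longrightarrow> a2 \<in> A2 \<Longrightarrow> x1 \<in> X1 \<Longrightarrow> x2 \<in> X2 \<Longrightarrow>
    x3 \<in> X3 \<Longrightarrow> x3' \<in> X3 \<Longrightarrow> (\<Sum>a3\<in>A3. Q a1 a2 a3 x1 x2 x3) = (\<Sum>a3\<in>A3. Q a1 a2 a3 x1 x2 x3')"
  unfolding ns_box3_def no_signalling3_def by blast

lemma ns_box3_wired3:
  assumes v1: "valid_wiring n X1s A1s X1' A1' W1" and v2: "valid_wiring n X2s A2s X2' A2' W2"
    and v3: "valid_wiring n X3s A3s X3' A3' W3"
    and fin: "finite A1'" "finite A2'" "finite A3'"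
    and ne: "\<And>i. i < n \<Longrightarrow>
      X1s i \<noteq> {} \<and> X2s i \<noteq> {} \<and> X3s i \<noteq> {} \<and> A1s i \<noteq> {} \<and> A2s i \<noteq> {} \<and> A3s i \<noteq> {}"
    and nsi: "\<And>i. i < n \<Longrightarrow> ns_box3 (X1s i) (X2s i) (X3s i) (A1s i) (A2s i) (A3s i) (Qs i)"
  shows "ns_box3 X1' X2' X3' A1' A2' A3' (wired3 n A1s A2s A3s Qs W1 W2 W3)"
proof -
  \<comment> \<open>Reference inputs; by no-signalling the marginals do not depend on them.\<close>
  define u1 u2 u3 where "u1 i = (SOME u. u \<in> X1s i)" and "u2 i = (SOME u. u \<in> X2s i)"
    and "u3 i = (SOME u. u \<in> X3s i)" for i
  have u: "u1 i \<in> X1s i" "u2 i \<in> X2s i" "u3 i \<in> X3s i" if "i < n" for i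
    using ne that unfolding u1_def u2_def u3_def by (simp_all add: some_in_eq)
  define R3 where "R3 i b1 b2 v1 v2 = (\<Sum>b3\<in>A3s i. Qs i b1 b2 b3 v1 v2 (u3 i))" for i b1 b2 v1 v2
  define R2 where "R2 i b1 b3 v1 v3 = (\<Sum>b2\<in>A2s i. Qs i b1 b2 b3 v1 (u2 i) v3)" for i b1 b3 v1 v3
  define R1 where "R1 i b3 b2 v3 v2 = (\<Sum>b1\<in>A1s i. Qs i b1 b2 b3 (u1 i) v2 v3)" for i b3 b2 v3 v2
  have marg3: "(\<Sum>a3\<in>A3'. wired3 n A1s A2s A3s Qs W1 W2 W3 a1 a2 a3 x1 x2 x3) =
      wired n A1s A2s R3 W1 W2 a1 a2 x1 x2"
    if "x1 \<in> X1'" "x2 \<in> X2'" "x3 \<in> X3'" for a1 a2 a3 x1 x2 x3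
    by (rule sum_wired3_party3[OF v1 v2 v3 that _ fin(3)])
      (use ne in simp, unfold R3_def, rule ns_box3_marginal3[OF nsi], simp_all add: u)
  have marg2: "(\<Sum>a2\<in>A2'. wired3 n A1s A2s A3s Qs W1 W2 W3 a1 a2 a3 x1 x2 x3) =
      wired n A1s A3s R2 W1 W3 a1 a3 x1 x3"
    if "x1 \<in> X1'" "x2 \<in> X2'" "x3 \<in> X3'" for a1 a2 a3 x1 x2 x3
    unfolding wired3_swap23[of _ _ A2s]
    by (rule sum_wired3_party3[OF v1 v3 v2 that(1,3,2) _ fin(2)])
      (use ne in simp, unfold R2_def, rule ns_box3_marginal2[OF nsi], simp_all add: u)
  have marg1: "(\<Sum>a1\<in>A1'. wired3 n A1s A2s A3s Qs W1 W2 W3 a1 a2 a3 x1 x2 x3) =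
      wired n A3s A2s R1 W3 W2 a3 a2 x3 x2"
    if "x1 \<in> X1'" "x2 \<in> X2'" "x3 \<in> X3'" for a1 a2 a3 x1 x2 x3
    unfolding wired3_swap13[of _ A1s]
    by (rule sum_wired3_party3[OF v3 v2 v1 that(3,2,1) _ fin(1)])
      (use ne in simp, unfold R1_def, rule ns_box3_marginal1[OF nsi], simp_all add: u)
  have sum_R3: "(\<Sum>b2\<in>A2s i. R3 i b1 b2 v1 v2) = (\<Sum>b2\<in>A2s i. R3 i b1 b2 v1 (u2 i))"
    if "i < n" "b1 \<in> A1s i" "v1 \<in> X1s i" "v2 \<in> X2s i" for i b1 v1 v2
  proof -
    have "(\<Sum>b2\<in>A2s i. R3 i b1 b2 v1 v2) = (\<Sum>b3\<in>A3s i. \<Sum>b2\<in>A2s i. Qs i b1 b2 b3 v1 v2 (u3 i))"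
      unfolding R3_def by (rule sum.swap)
    also have "\<dots> = (\<Sum>b3\<in>A3s i. \<Sum>b2\<in>A2s i. Qs i b1 b2 b3 v1 (u2 i) (u3 i))"
      using that u by (intro sum.cong refl ns_box3_marginal2[OF nsi]) simp_all
    also have "\<dots> = (\<Sum>b2\<in>A2s i. R3 i b1 b2 v1 (u2 i))"
      unfolding R3_def by (rule sum.swap)
    finally show ?thesis .
  qed
  have normalised: "(\<Sum>a1\<in>A1'. \<Sum>a2\<in>A2'. \<Sum>a3\<in>A3'. wired3 n A1s A2s A3s Qs W1 W2 W3 a1 a2 a3 x1 x2 x3) = 1"
    if x: "x1 \<in> X1'" "x2 \<in> X2'" "x3 \<in> X3'" for x1 x2 x3
    unfolding marg3[OF x]
  proof (rule sum_wired_eq_1[OF v1 v2 x(1,2) _ fin(1,2)])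
    show "A1s i \<noteq> {} \<and> A2s i \<noteq> {}" if "i < n" for i
      using ne that by simp
    show "(\<Sum>b1\<in>A1s i. \<Sum>b2\<in>A2s i. R3 i b1 b2 v1 (u2 i)) = 1" if "i < n" "v1 \<in> X1s i" for i v1
      unfolding R3_def using ns_box3_sum_eq_1[OF nsi] u that by simp
  qed (rule sum_R3)
  show ?thesis
    unfolding ns_box3_def is_box3_def no_signalling3_def
    using wired3_nonneg[OF v1 v2 v3 _ _ _ ns_box3_nonneg[OF nsi]] normalised marg1 marg2 marg3 by simp
qed

lemma wired3_sym12:
  assumes v1: "valid_wiring n X1s A1s X1' A1' W1" and v2: "valid_wiring n X2s A2s X2' A2' W2"
    and x: "x1 \<in> X1'" "x1' \<in> X1'" "x2 \<in> X2'"
    and sym: "\<And>i b1 b1' b2 u1 u1' u2. i < n \<Longrightarrow> b1 \<in> A1s i \<Longrightarrow> b1' \<in> A1s i \<Longrightarrow> b2 \<in> A2s i \<Longrightarrow>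
       u1 \<in> X1s i \<Longrightarrow> u1' \<in> X1s i \<Longrightarrow> u2 \<in> X2s i \<Longrightarrow> Qs i b1 b1' b2 u1 u1' u2 = Qs i b1' b1 b2 u1' u1 u2"
  shows "wired3 n A1s A1s A2s Qs W1 W1 W2 a1 a1' a2 x1 x1' x2 =
    wired3 n A1s A1s A2s Qs W1 W1 W2 a1' a1 a2 x1' x1 x2"
  by (subst wired3_swap12, rule wired3_cong[OF v1 v1 v2 x(2,1,3)]) (rule sym)

lemma wired3_sym23:
  assumes v1: "valid_wiring n X1s A1s X1' A1' W1" and v2: "valid_wiring n X2s A2s X2' A2' W2"
    and x: "x1 \<in> X1'" "x2 \<in> X2'" "x2' \<in> X2'"
    and sym: "\<And>i b1 b2 b2' u1 u2 u2'. i < n \<Longrightarrow> b1 \<in> A1s i \<Longrightarrow> b2 \<in> A2s i \<Longrightarrow> b2' \<in> A2s i \<Longrightarrow>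
       u1 \<in> X1s i \<Longrightarrow> u2 \<in> X2s i \<Longrightarrow> u2' \<in> X2s i \<Longrightarrow> Qs i b1 b2 b2' u1 u2 u2' = Qs i b1 b2' b2 u1 u2' u2"
  shows "wired3 n A1s A2s A2s Qs W1 W2 W2 a1 a2 a2' x1 x2 x2' =
    wired3 n A1s A2s A2s Qs W1 W2 W2 a1 a2' a2 x1 x2' x2"
  by (subst wired3_swap23, rule wired3_cong[OF v1 v2 v2 x(1,3,2)]) (rule sym)

definition GW_witness :: "nat set \<Rightarrow> nat set \<Rightarrow> nat set \<Rightarrow> nat set \<Rightarrow> box2 \<Rightarrow> box3 \<Rightarrow> box3 \<Rightarrow> bool" where
  "GW_witness X Y A B P PA PB \<longleftrightarrow>
     ns_box3 X X Y A A B PA \<and> ns_box3 X Y Y A B B PB \<and>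
     (\<forall>a\<in>A. \<forall>a'\<in>A. \<forall>b\<in>B. \<forall>x\<in>X. \<forall>x'\<in>X. \<forall>y\<in>Y. PA a a' b x x' y = PA a' a b x' x y) \<and>
     (\<forall>a\<in>A. \<forall>b\<in>B. \<forall>b'\<in>B. \<forall>x\<in>X. \<forall>y\<in>Y. \<forall>y'\<in>Y. PB a b b' x y y' = PB a b' b x y' y) \<and>
     (\<forall>a\<in>A. \<forall>b\<in>B. \<forall>x\<in>X. \<forall>y\<in>Y. \<forall>x'\<in>X. \<forall>y'\<in>Y.
        P a b x y = (\<Sum>a'\<in>A. PA a a' b x x' y) \<and> P a b x y = (\<Sum>b'\<in>B. PB a b b' x y y'))"

lemma GW_iff_witness: "GW X Y A B P \<longleftrightarrow> is_box2 X Y A B P \<and> (\<exists>PA PB. GW_witness X Y A B P PA PB)"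
  unfolding GW_def GW_witness_def ..

lemma GW_witness_is_box2:
  assumes "GW_witness X Y A B P PA PB"
  shows "is_box2 X Y A B P"
proof -
  have "ns_box3 X Y Y A B B PB" "\<And>a b x y. a \<in> A \<Longrightarrow> b \<in> B \<Longrightarrow> x \<in> X \<Longrightarrow> y \<in> Y \<Longrightarrow>
      P a b x y = (\<Sum>b'\<in>B. PB a b b' x y y)"
    using assms unfolding GW_witness_def by blast+
  then show ?thesis
    unfolding is_box2_def ns_box3_def is_box3_def by (simp add: sum_nonneg)
qed

lemma GW_witnessD:
  assumes "GW_witness X Y A B P PA PB"
  shows "ns_box3 X X Y A A B PA" "ns_box3 X Y Y A B B PB"
    and "\<And>a a' b x x' y. a \<in> A \<Longrightarrow> a' \<in> A \<Longrightarrow> b \<in> B \<Longrightarrow> x \<in> X \<Longrightarrow> x' \<in> X \<Longrightarrow> y \<in> Y \<Longrightarrow>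
      PA a a' b x x' y = PA a' a b x' x y"
    and "\<And>a b b' x y y'. a \<in> A \<Longrightarrow> b \<in> B \<Longrightarrow> b' \<in> B \<Longrightarrow> x \<in> X \<Longrightarrow> y \<in> Y \<Longrightarrow> y' \<in> Y \<Longrightarrow>
      PB a b b' x y y' = PB a b' b x y' y"
    and "\<And>a b x x' y. a \<in> A \<Longrightarrow> b \<in> B \<Longrightarrow> x \<in> X \<Longrightarrow> x' \<in> X \<Longrightarrow> y \<in> Y \<Longrightarrow>
      (\<Sum>a'\<in>A. PA a a' b x x' y) = P a b x y"
    and "\<And>a b x y y'. a \<in> A \<Longrightarrow> b \<in> B \<Longrightarrow> x \<in> X \<Longrightarrow> y \<in> Y \<Longrightarrow> y' \<in> Y \<Longrightarrow>
      (\<Sum>b'\<in>B. PB a b b' x y y') = P a b x y"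
  using assms unfolding GW_witness_def by metis+

lemma GW_witness_wired:
  assumes sc: "\<forall>i<n. scenario (Xs i) (Ys i) (As i) (Bs i)" and sc': "scenario X' Y' A' B'"
    and vA: "valid_wiring n Xs As X' A' WA" and vB: "valid_wiring n Ys Bs Y' B' WB"
    and wit: "\<forall>i<n. GW_witness (Xs i) (Ys i) (As i) (Bs i) (Ps i) (PAs i) (PBs i)"
  shows "GW_witness X' Y' A' B' (wired n As Bs Ps WA WB)
    (wired3 n As As Bs PAs WA WA WB) (wired3 n As Bs Bs PBs WA WB WB)"
proof -
  have fin: "finite A'" "finite B'"
    using sc' unfolding scenario_def by simp_all
  have ne: "\<forall>i<n. Xs i \<noteq> {} \<and> Ys i \<noteq> {} \<and> As i \<noteq> {} \<and> Bs i \<noteq> {}"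
    using sc unfolding scenario_def by simp
  note wit_i = GW_witnessD[OF wit[rule_format]]
  have margA: "wired n As Bs Ps WA WB a b x y = (\<Sum>a'\<in>A'. wired3 n As As Bs PAs WA WA WB a a' b x x' y)"
    if "x \<in> X'" "y \<in> Y'" "x' \<in> X'" for a b x y x'
    unfolding wired3_swap23[of _ _ As]
    by (rule sum_wired3_party3[OF vA vB vA that, symmetric]) (use ne fin wit_i(5) in auto)
  have margB: "wired n As Bs Ps WA WB a b x y = (\<Sum>b'\<in>B'. wired3 n As Bs Bs PBs WA WB WB a b b' x y y')"
    if "x \<in> X'" "y \<in> Y'" "y' \<in> Y'" for a b x y y'
    by (rule sum_wired3_party3[OF vA vB vB that, symmetric]) (use ne fin wit_i(6) in auto)
  have nsA: "ns_box3 X' X' Y' A' A' B' (wired3 n As As Bs PAs WA WA WB)"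
    by (rule ns_box3_wired3[OF vA vA vB fin(1,1,2)]) (use ne wit_i(1) in auto)
  have nsB: "ns_box3 X' Y' Y' A' B' B' (wired3 n As Bs Bs PBs WA WB WB)"
    by (rule ns_box3_wired3[OF vA vB vB fin(1,2,2)]) (use ne wit_i(2) in auto)
  have symA: "wired3 n As As Bs PAs WA WA WB a a' b x x' y = wired3 n As As Bs PAs WA WA WB a' a b x' x y"
    if "x \<in> X'" "x' \<in> X'" "y \<in> Y'" for a a' b x x' y
    by (rule wired3_sym12[OF vA vB that wit_i(3)])
  have symB: "wired3 n As Bs Bs PBs WA WB WB a b b' x y y' = wired3 n As Bs Bs PBs WA WB WB a b' b x y' y"
    if "x \<in> X'" "y \<in> Y'" "y' \<in> Y'" for a b b' x y y'
    by (rule wired3_sym23[OF vA vB that wit_i(4)])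
  show ?thesis
    unfolding GW_witness_def by (intro conjI ballI nsA nsB symA symB margA margB)
qed

theorem theorem2:
  fixes n :: nat
    and Xs Ys As Bs :: "nat \<Rightarrow> nat set"
    and Ps :: "nat \<Rightarrow> box2"
    and X' Y' A' B' :: "nat set"
    and WA WB :: wiring
  assumes "\<forall>i<n. scenario (Xs i) (Ys i) (As i) (Bs i)"
    and "\<forall>i<n. GW (Xs i) (Ys i) (As i) (Bs i) (Ps i)"
    and "scenario X' Y' A' B'"
    and "valid_wiring n Xs As X' A' WA"
    and "valid_wiring n Ys Bs Y' B' WB"
  shows "GW X' Y' A' B' (wired n As Bs Ps WA WB)"
proof -
  have "\<forall>i. \<exists>PA PB. i < n \<longrightarrow> GW_witness (Xs i) (Ys i) (As i) (Bs i) (Ps i) PA PB"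
    using assms(2) unfolding GW_iff_witness by blast
  then obtain PAs PBs where "\<forall>i<n. GW_witness (Xs i) (Ys i) (As i) (Bs i) (Ps i) (PAs i) (PBs i)"
    by metis
  from GW_witness_wired[OF assms(1,3-5) this] show ?thesis
    unfolding GW_iff_witness by (blast intro: GW_witness_is_box2)
qed

end
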